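(* $W\in C^{1,2,1}([0,T)\times\mathbb{R}_+^2)\cap C(\mathcal{O})$, and $W$ satisfies $-\widehat{\mathcal{L}}W=\widehat u$ on $[0,T)\times\mathbb{R}_+^2$ and $W(T,z,h)=0$, where $$\widehat{\mathcal{L}}W=W_t+\tfrac12\theta^2z^2W_{zz}+(\rho-r+m^0+m^1h^{-\kappa})zW_z+(-\delta h+f(I))W_h-(\rho+m^0+m^1h^{-\kappa})W.$$
   Context: Fix constants $T>0$, $r>0$, $\mu\in\mathbb{R}$, $\sigma>0$, $\rho>0$, $m^0\ge 0$, $m^1\ge 0$, $\kappa>0$, $\delta>0$, $\alpha\in(0,1)$, $I>0$ and a number $f(I)>0$. Write $\mathbb{R}_+=(0,\infty)$, $\mathcal{O}=[0,T]\times\mathbb{R}_+^2$, $\theta=(\mu-r)/\sigma$. Let $B$ be a standard Brownian motion. Let $\widehat u(z,h)=(1-\alpha)(z/\alpha)^{\alpha/(\alpha-1)}h$. For $(t,z,h)\in\mathcal{O}$ and $s\in[t,T]$ let $H^2_s=he^{-\delta(s-t)}+\frac{f(I)}{\delta}(1-e^{-\delta(s-t)})$, $M^{H^2}_s=m^0+m^1(H^2_s)^{-\kappa}$, and let $Z^2$ solve $dZ^2_s=(\rho-r+M^{H^2}_s)Z^2_s\,ds-\theta Z^2_s\,dB_s$, $Z^2_t=z$. Define $W(t,z,h)=\mathbb{E}\big[\int_t^T e^{-\int_t^s(\rho+M^{H^2}_u)du}\,\widehat u(Z^2_s,H^2_s)\,ds\big]$. *)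

theory Defs
  imports "HOL-Probability.Probability"
begin

definition std_brownian_motion :: "'a measure \<Rightarrow> (real \<Rightarrow> 'a \<Rightarrow> real) \<Rightarrow> bool" where
  "std_brownian_motion M B \<longleftrightarrow>
     (\<forall>t\<ge>0. B t \<in> borel_measurable M) \<and>
     (\<forall>\<omega>\<in>space M. B 0 \<omega> = 0) \<and>
     (\<forall>\<omega>\<in>space M. continuous_on {0..} (\<lambda>t. B t \<omega>)) \<and>
     (\<forall>s t. 0 \<le> s \<and> s < t \<longrightarrow>
        distributed M lborel (\<lambda>\<omega>. B t \<omega> - B s \<omega>) (normal_density 0 (sqrt (t - s)))) \<and>
     (\<forall>(n::nat) (ts::nat \<Rightarrow> real). (0 \<le> ts 0 \<and> (\<forall>i<n. ts i < ts (Suc i))) \<longrightarrow>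
        prob_space.indep_vars M (\<lambda>_. borel) (\<lambda>i \<omega>. B (ts (Suc i)) \<omega> - B (ts i) \<omega>) {..<n})"

definition u_hat :: "real \<Rightarrow> real \<Rightarrow> real \<Rightarrow> real" where
  "u_hat \<alpha> z h = (1 - \<alpha>) * (z / \<alpha>) powr (\<alpha> / (\<alpha> - 1)) * h"

text \<open>Deterministic habit process H^2 started at h at time t; fI stands for f(I).\<close>
definition H2 :: "real \<Rightarrow> real \<Rightarrow> real \<Rightarrow> real \<Rightarrow> real \<Rightarrow> real" where
  "H2 \<delta> fI t h s = h * exp (- \<delta> * (s - t)) + fI / \<delta> * (1 - exp (- \<delta> * (s - t)))"

definition MH2 :: "real \<Rightarrow> real \<Rightarrow> real \<Rightarrow> real \<Rightarrow> real \<Rightarrow> real \<Rightarrow> real \<Rightarrow> real \<Rightarrow> real" where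
  "MH2 m0 m1 \<kappa> \<delta> fI t h s = m0 + m1 * (H2 \<delta> fI t h s) powr (- \<kappa>)"

text \<open>Z^2: the (unique strong) solution of the linear SDE
  dZ = (rho - r + M_s) Z ds - theta Z dB, Z_t = z, written in closed form.\<close>
definition Z2 :: "(real \<Rightarrow> 'a \<Rightarrow> real) \<Rightarrow> real \<Rightarrow> real \<Rightarrow> real \<Rightarrow> real \<Rightarrow> real \<Rightarrow> real \<Rightarrow> real
    \<Rightarrow> real \<Rightarrow> real \<Rightarrow> real \<Rightarrow> real \<Rightarrow> real \<Rightarrow> real \<Rightarrow> 'a \<Rightarrow> real" where
  "Z2 B r \<mu> \<sigma> \<rho> m0 m1 \<kappa> \<delta> fI t z h s \<omega> =
     z * exp ((\<rho> - r) * (s - t) + (LINT u:{t..s}|lborel. MH2 m0 m1 \<kappa> \<delta> fI t h u)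
              - ((\<mu> - r) / \<sigma>)\<^sup>2 / 2 * (s - t) - ((\<mu> - r) / \<sigma>) * (B s \<omega> - B t \<omega>))"

definition W_fun :: "'a measure \<Rightarrow> (real \<Rightarrow> 'a \<Rightarrow> real) \<Rightarrow> real \<Rightarrow> real \<Rightarrow> real \<Rightarrow> real \<Rightarrow> real
    \<Rightarrow> real \<Rightarrow> real \<Rightarrow> real \<Rightarrow> real \<Rightarrow> real \<Rightarrow> real \<Rightarrow> real \<Rightarrow> real \<Rightarrow> real \<Rightarrow> real" where
  "W_fun M B T r \<mu> \<sigma> \<rho> m0 m1 \<kappa> \<delta> \<alpha> fI t z h =
     (\<integral>\<omega>. (LINT s:{t..T}|lborel.
         exp (- (LINT u:{t..s}|lborel. \<rho> + MH2 m0 m1 \<kappa> \<delta> fI t h u))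
         * u_hat \<alpha> (Z2 B r \<mu> \<sigma> \<rho> m0 m1 \<kappa> \<delta> fI t z h s \<omega>) (H2 \<delta> fI t h s)) \<partial>M)"

end

theory Submission
  imports Defs
begin

(* The utility u_hat is homogeneous of degree p = alpha / (alpha - 1) in z, and Z^2 is a geometric
   Brownian motion with deterministic drift.  Fubini and the Gaussian moment generating function
   therefore give
     W(t, z, h) = z^p g(T - t, h),   g(tau, h) = int_0^tau c exp(beta s - q Lambda(s, h)) H_s ds,
   where H is the deterministic habit flow started at h, Lambda the mortality accumulated along it,
   q = 1 - p, c = (1 - alpha) / alpha^p and beta = - rho + p (rho - r) + theta^2 p (p - 1) / 2.
   The flow satisfies d/ds H = (f(I) - delta h) d/dh H, which yields the transport identity
     d/dtau g = (f(I) - delta h) d/dh g + (beta - q m(h)) g + c h,   m(h) = m^0 + m^1 h^(-kappa).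
   Applied to z^p g, the z-derivatives and the discount terms of the operator produce
   (beta - q m(h)) z^p g, so the equation for W reduces to this identity. *)

section \<open>Integrals depending on a parameter\<close>

lemma integral_Icc_rescale:
  fixes f :: "real \<Rightarrow> 'b::real_normed_vector"
  assumes "s \<ge> 0"
  shows "integral {0..s} f = s *\<^sub>R integral {0..1} (\<lambda>u. f (s * u))"
proof (cases "s = 0")
  case False
  then have "(\<lambda>x. x / s) ` {0..s} = {0..1}"
    using assms by simp
  then show ?thesis
    using integral_stretch_real[of s 0 s f] False assms by simp
qed simp

lemma continuous_on_integral_upper_param:
  fixes F :: "real \<Rightarrow> 'a::topological_space \<Rightarrow> 'b::banach"
  assumes F: "continuous_on ({0..} \<times> U) (\<lambda>(v, x). F v x)"
  shows "continuous_on ({0..} \<times> U) (\<lambda>(s, x). integral {0..s} (\<lambda>v. F v x))"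
proof -
  have "continuous_on (({0..} \<times> U) \<times> cbox 0 1) ((\<lambda>(v, x). F v x) \<circ> (\<lambda>(y, u). (fst y * u, snd y)))"
    by (rule continuous_on_compose[OF _ continuous_on_subset[OF F]])
      (auto simp: case_prod_beta intro!: continuous_intros)
  then have "continuous_on ({0..} \<times> U) (\<lambda>y. integral (cbox 0 1) (\<lambda>u. F (fst y * u) (snd y)))"
    by (intro integral_continuous_on_param) (simp add: o_def case_prod_beta)
  then have "continuous_on ({0..} \<times> U) (\<lambda>y. fst y *\<^sub>R integral {0..1} (\<lambda>u. F (fst y * u) (snd y)))"
    by (intro continuous_intros) auto
  then show ?thesis
    by (rule continuous_on_eq) (auto intro: integral_Icc_rescale[symmetric])
qed

lemma DERIV_integral_param:
  fixes F F' :: "real \<Rightarrow> real \<Rightarrow> real"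
  assumes U: "open U" "convex U" "x \<in> U"
    and F': "\<And>v y. v \<in> {a..b} \<Longrightarrow> y \<in> U \<Longrightarrow> ((\<lambda>y. F v y) has_real_derivative F' v y) (at y)"
    and F_cont: "continuous_on ({a..b} \<times> U) (\<lambda>(v, y). F v y)"
    and F'_cont: "continuous_on ({a..b} \<times> U) (\<lambda>(v, y). F' v y)"
  shows "((\<lambda>y. integral {a..b} (\<lambda>v. F v y)) has_real_derivative integral {a..b} (\<lambda>v. F' v x)) (at x)"
proof -
  have "((\<lambda>y. integral (cbox a b) (\<lambda>v. F v y)) has_real_derivative integral (cbox a b) (\<lambda>v. F' v x))
      (at x within U)"
  proof (rule leibniz_rule_field_derivative[OF _ _ _ U(3) U(2)])
    show "(\<lambda>v. F v y) integrable_on cbox a b" if "y \<in> U" for y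
    proof -
      have "continuous_on {a..b} ((\<lambda>(v, y). F v y) \<circ> (\<lambda>v. (v, y)))"
        by (rule continuous_on_compose[OF _ continuous_on_subset[OF F_cont]])
          (use that in \<open>auto intro!: continuous_intros\<close>)
      then show ?thesis
        unfolding cbox_interval by (simp add: o_def integrable_continuous_real)
    qed
    show "((\<lambda>y. F v y) has_field_derivative F' v y) (at y within U)" if "y \<in> U" "v \<in> cbox a b" for y v
      using F' that by (auto intro: has_field_derivative_at_within simp: cbox_interval)
    show "continuous_on (U \<times> cbox a b) (\<lambda>(y, v). F' v y)"
      unfolding cbox_interval by (rule continuous_on_swap_args[OF F'_cont])
  qed
  then show ?thesis
    unfolding cbox_interval at_within_open[OF U(3) U(1)] .
qed

lemma set_integral_Icc_shift:
  fixes f :: "real \<Rightarrow> real"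
  assumes "continuous_on {0..s - t} f"
  shows "(LINT u:{t..s}|lborel. f (u - t)) = integral {0..s - t} f"
proof -
  have "continuous_on {t..s} (\<lambda>u. f (u - t))"
    by (rule continuous_on_compose2[OF assms]) (auto intro!: continuous_intros)
  then have "(LINT u:{t..s}|lborel. f (u - t)) = integral {t..s} (\<lambda>u. f (u - t))"
    by (intro set_borel_integral_eq_integral(2) borel_integrable_atLeastAtMost')
  also have "\<dots> = integral {0..s - t} f"
    using integral_shift_Icc_real[of 0 "s - t" "\<lambda>u. f (u - t)" t] by (simp add: o_def)
  finally show ?thesis .
qed

lemma continuous_on_slice:
  assumes "continuous_on (A \<times> B) (\<lambda>(x, y). F x y)" and "y \<in> B" and "S \<subseteq> A"
  shows "continuous_on S (\<lambda>x. F x y)"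
  by (rule continuous_on_compose2[OF assms(1), of S "\<lambda>x. (x, y)", simplified])
    (use assms(2,3) in \<open>auto intro!: continuous_intros\<close>)

section \<open>Measurability and exponential moments of Brownian motion\<close>

lemma LIMSEQ_floor_grid: "(\<lambda>n. real_of_int \<lfloor>real (Suc n) * x\<rfloor> / real (Suc n)) \<longlonglongrightarrow> x"
proof -
  have bounds: "x - 1 / real (Suc n) \<le> real_of_int \<lfloor>real (Suc n) * x\<rfloor> / real (Suc n)
      \<and> real_of_int \<lfloor>real (Suc n) * x\<rfloor> / real (Suc n) \<le> x" for n
  proof -
    have "real (Suc n) * x - 1 \<le> real_of_int \<lfloor>real (Suc n) * x\<rfloor>"
      and "real_of_int \<lfloor>real (Suc n) * x\<rfloor> \<le> real (Suc n) * x"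
      by linarith+
    moreover have "x - 1 / real (Suc n) = (real (Suc n) * x - 1) / real (Suc n)"
      by (simp add: field_simps)
    ultimately show ?thesis
      by (simp add: divide_right_mono pos_divide_le_eq mult.commute)
  qed
  have lim: "(\<lambda>n. x - 1 / real (Suc n)) \<longlonglongrightarrow> x"
    using tendsto_diff[OF tendsto_const LIMSEQ_inverse_real_of_nat, of x] by (simp add: inverse_eq_divide)
  show ?thesis
    using bounds by (intro tendsto_sandwich[OF always_eventually always_eventually lim tendsto_const]) auto
qed

lemma measurable_continuous_paths:
  fixes X :: "real \<Rightarrow> 'a \<Rightarrow> 'b::metric_space"
  assumes meas: "\<And>t. t \<ge> 0 \<Longrightarrow> X t \<in> borel_measurable M"
    and cont: "\<And>\<omega>. \<omega> \<in> space M \<Longrightarrow> continuous_on {0..} (\<lambda>t. X t \<omega>)"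
  shows "(\<lambda>(t, \<omega>). X (max 0 t) \<omega>) \<in> borel_measurable (lborel \<Otimes>\<^sub>M M)"
proof -
  define grid where "grid n t = max 0 (real_of_int \<lfloor>real (Suc n) * t\<rfloor> / real (Suc n))" for n t
  show ?thesis
  proof (rule borel_measurable_LIMSEQ_metric[where f = "\<lambda>n (t, \<omega>). X (grid n t) \<omega>"])
    fix n
    have "(\<lambda>x. (\<lambda>i x. X (max 0 (real_of_int i / real (Suc n))) (snd x)) \<lfloor>real (Suc n) * fst x\<rfloor> x)
        \<in> borel_measurable (lborel \<Otimes>\<^sub>M M)"
    proof (rule measurable_compose_countable'[where I = UNIV and g = "\<lambda>x. \<lfloor>real (Suc n) * fst x\<rfloor>"
          and f = "\<lambda>i x. X (max 0 (real_of_int i / real (Suc n))) (snd x)"])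
      show "(\<lambda>x. X (max 0 (real_of_int i / real (Suc n))) (snd x)) \<in> borel_measurable (lborel \<Otimes>\<^sub>M M)" for i
        by (rule measurable_compose[OF measurable_snd meas]) simp
      show "(\<lambda>x. \<lfloor>real (Suc n) * fst x\<rfloor>) \<in> measurable (lborel \<Otimes>\<^sub>M M) (count_space UNIV)"
        by measurable
    qed simp
    then show "(\<lambda>(t, \<omega>). X (grid n t) \<omega>) \<in> borel_measurable (lborel \<Otimes>\<^sub>M M)"
      by (simp add: grid_def case_prod_beta)
  next
    fix x :: "real \<times> 'a" assume "x \<in> space (lborel \<Otimes>\<^sub>M M)"
    then obtain t \<omega> where x: "x = (t, \<omega>)" and \<omega>: "\<omega> \<in> space M"
      by (auto simp: space_pair_measure)
    have "(\<lambda>n. grid n t) \<longlonglongrightarrow> max 0 t"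
      unfolding grid_def by (intro tendsto_max tendsto_const LIMSEQ_floor_grid)
    from continuous_on_tendsto_compose[OF cont[OF \<omega>] this]
    show "(\<lambda>n. (\<lambda>(t, \<omega>). X (grid n t) \<omega>) x) \<longlonglongrightarrow> (\<lambda>(t, \<omega>). X (max 0 t) \<omega>) x"
      by (simp add: x grid_def)
  qed
qed

lemma std_brownian_motion_measurable_pair:
  assumes "std_brownian_motion M B"
  shows "(\<lambda>x. B (max 0 (fst x)) (snd x)) \<in> borel_measurable (lborel \<Otimes>\<^sub>M M)"
  using measurable_continuous_paths[of B M] assms
  by (simp add: std_brownian_motion_def case_prod_beta)

lemma normal_density_mult_exp:
  assumes "\<sigma> > 0"
  shows "normal_density 0 \<sigma> x * exp (l * x) = exp (l\<^sup>2 * \<sigma>\<^sup>2 / 2) * normal_density (l * \<sigma>\<^sup>2) \<sigma> x"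
proof -
  have "- (x - 0)\<^sup>2 / (2 * \<sigma>\<^sup>2) + l * x = l\<^sup>2 * \<sigma>\<^sup>2 / 2 + - (x - l * \<sigma>\<^sup>2)\<^sup>2 / (2 * \<sigma>\<^sup>2)"
    using assms by (simp add: field_simps power2_eq_square)
  then show ?thesis
    unfolding normal_density_def by (simp add: ac_simps flip: exp_add)
qed

lemma std_brownian_motion_exp_moment:
  assumes "prob_space M" and BM: "std_brownian_motion M B" and "0 \<le> t" "t \<le> s"
  shows "integrable M (\<lambda>\<omega>. exp (l * (B s \<omega> - B t \<omega>)))"
    and "(\<integral>\<omega>. exp (l * (B s \<omega> - B t \<omega>)) \<partial>M) = exp (l\<^sup>2 * (s - t) / 2)"
proof -
  interpret prob_space M by fact
  have "integrable M (\<lambda>\<omega>. exp (l * (B s \<omega> - B t \<omega>)))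
      \<and> (\<integral>\<omega>. exp (l * (B s \<omega> - B t \<omega>)) \<partial>M) = exp (l\<^sup>2 * (s - t) / 2)"
  proof (cases "t = s")
    case False
    define \<sigma> where "\<sigma> = sqrt (s - t)"
    have \<sigma>: "\<sigma> > 0" "\<sigma>\<^sup>2 = s - t"
      using False assms by (auto simp: \<sigma>_def)
    have distr: "distributed M lborel (\<lambda>\<omega>. B s \<omega> - B t \<omega>) (normal_density 0 \<sigma>)"
      using BM False assms unfolding std_brownian_motion_def \<sigma>_def by auto
    have density: "(\<lambda>x. normal_density 0 \<sigma> x * exp (l * x))
        = (\<lambda>x. exp (l\<^sup>2 * \<sigma>\<^sup>2 / 2) * normal_density (l * \<sigma>\<^sup>2) \<sigma> x)"
      using normal_density_mult_exp[OF \<sigma>(1)] by auto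
    have "integrable lborel (\<lambda>x. normal_density 0 \<sigma> x * exp (l * x))"
      unfolding density using \<sigma> by (intro integrable_mult_right integrable_normal_density)
    then show ?thesis
      using distributed_integrable[OF distr, of "\<lambda>x. exp (l * x)"]
        distributed_integral[OF distr, of "\<lambda>x. exp (l * x)"]
      by (simp add: density \<sigma>)
  qed (simp add: prob_space)
  then show "integrable M (\<lambda>\<omega>. exp (l * (B s \<omega> - B t \<omega>)))"
    and "(\<integral>\<omega>. exp (l * (B s \<omega> - B t \<omega>)) \<partial>M) = exp (l\<^sup>2 * (s - t) / 2)"
    by auto
qed

lemma expectation_set_integral_exp_increment:
  fixes D :: "real \<Rightarrow> real"
  assumes P: "prob_space M" and BM: "std_brownian_motion M B" and t: "0 \<le> t"
    and D: "continuous_on {t..T} D"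
  shows "(\<integral>\<omega>. (LINT s:{t..T}|lborel. D s * exp (l * (B s \<omega> - B t \<omega>))) \<partial>M)
       = (LINT s:{t..T}|lborel. D s * exp (l\<^sup>2 * (s - t) / 2))"
proof -
  interpret prob_space M by (rule P)
  interpret pair_sigma_finite lborel M ..
  define F where "F s \<omega> = (indicator {t..T} s * D s) * exp (l * (B (max 0 s) \<omega> - B t \<omega>))" for s \<omega>
  have [measurable]: "(\<lambda>s. indicator {t..T} s * D s) \<in> borel_measurable borel"
    using borel_measurable_continuous_on_indicator[OF _ D] by simp
  note [measurable] = std_brownian_motion_measurable_pair[OF BM]
  have [measurable]: "B t \<in> borel_measurable M"
    using BM t by (auto simp: std_brownian_motion_def)
  have F_measurable: "case_prod F \<in> borel_measurable (lborel \<Otimes>\<^sub>M M)"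
    unfolding F_def case_prod_beta by measurable
  have F_moments: "integrable M (F s) \<and> (\<integral>\<omega>. F s \<omega> \<partial>M) = indicator {t..T} s * D s * exp (l\<^sup>2 * (s - t) / 2)
       \<and> (\<integral>\<omega>. norm (F s \<omega>) \<partial>M) = indicator {t..T} s * \<bar>D s\<bar> * exp (l\<^sup>2 * (s - t) / 2)" for s
  proof (cases "s \<in> {t..T}")
    case True
    then have "F s = (\<lambda>\<omega>. D s * exp (l * (B s \<omega> - B t \<omega>)))"
      and "(\<lambda>\<omega>. norm (F s \<omega>)) = (\<lambda>\<omega>. \<bar>D s\<bar> * exp (l * (B s \<omega> - B t \<omega>)))"
      using t by (auto simp: F_def fun_eq_iff abs_mult)
    then show ?thesis
      using True std_brownian_motion_exp_moment[OF P BM t, of s l] by simp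
  next
    case False
    then have "F s = (\<lambda>\<omega>. 0)"
      by (simp add: F_def fun_eq_iff)
    then show ?thesis
      using False by simp
  qed
  have "integrable lborel (\<lambda>s. indicator {t..T} s *\<^sub>R (\<bar>D s\<bar> * exp (l\<^sup>2 * (s - t) / 2)))"
    using D by (intro borel_integrable_atLeastAtMost'[unfolded set_integrable_def] continuous_intros) auto
  then have F_integrable: "integrable (lborel \<Otimes>\<^sub>M M) (case_prod F)"
    using F_moments by (intro Fubini_integrable F_measurable) (auto simp: mult.assoc)
  have "(\<integral>\<omega>. (LINT s:{t..T}|lborel. D s * exp (l * (B s \<omega> - B t \<omega>))) \<partial>M)
      = (\<integral>\<omega>. (\<integral>s. F s \<omega> \<partial>lborel) \<partial>M)"
    unfolding set_lebesgue_integral_def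
    using t by (intro Bochner_Integration.integral_cong refl) (auto simp: F_def indicator_def)
  also have "\<dots> = (\<integral>s. (\<integral>\<omega>. F s \<omega> \<partial>M) \<partial>lborel)"
    using F_integrable by (rule Fubini_integral)
  also have "\<dots> = (LINT s:{t..T}|lborel. D s * exp (l\<^sup>2 * (s - t) / 2))"
    unfolding set_lebesgue_integral_def using F_moments by (simp add: mult.assoc)
  finally show ?thesis .
qed

section \<open>The habit flow and the value function\<close>

text \<open>\<open>flow s h\<close> is \<open>H\<^sup>2\<close> at time \<open>t + s\<close> when started from \<open>h\<close> at time \<open>t\<close>, \<open>Lambda\<close> is the
  integrated mortality intensity along it, and the suffix \<open>_dh\<close> marks a derivative in \<open>h\<close>.\<close>

locale habit_model =
  fixes \<delta> fI \<kappa> m0 m1 \<beta> c q :: real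
  assumes \<delta>_pos: "\<delta> > 0" and fI_pos: "fI > 0"
begin

definition flow :: "real \<Rightarrow> real \<Rightarrow> real" where
  "flow s h = h * exp (- \<delta> * s) + fI / \<delta> * (1 - exp (- \<delta> * s))"

definition mort :: "real \<Rightarrow> real" where
  "mort y = m0 + m1 * y powr (- \<kappa>)"

definition mort' :: "real \<Rightarrow> real" where
  "mort' y = m1 * (- \<kappa> * y powr (- \<kappa> - 1))"

definition Lambda :: "real \<Rightarrow> real \<Rightarrow> real" where
  "Lambda s h = integral {0..s} (\<lambda>v. mort (flow v h))"

definition Lambda_dh :: "real \<Rightarrow> real \<Rightarrow> real" where
  "Lambda_dh s h = integral {0..s} (\<lambda>v. mort' (flow v h) * exp (- \<delta> * v))"

definition k :: "real \<Rightarrow> real \<Rightarrow> real" where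
  "k s h = c * exp (\<beta> * s - q * Lambda s h) * flow s h"

definition k_dh :: "real \<Rightarrow> real \<Rightarrow> real" where
  "k_dh s h = c * exp (\<beta> * s - q * Lambda s h) * (exp (- \<delta> * s) - q * Lambda_dh s h * flow s h)"

definition g :: "real \<Rightarrow> real \<Rightarrow> real" where
  "g s h = integral {0..s} (\<lambda>v. k v h)"

definition g_dh :: "real \<Rightarrow> real \<Rightarrow> real" where
  "g_dh s h = integral {0..s} (\<lambda>v. k_dh v h)"

abbreviation D :: "(real \<times> real) set" where
  "D \<equiv> {0..} \<times> {0<..}"

lemma flow_pos: "s \<ge> 0 \<Longrightarrow> h > 0 \<Longrightarrow> flow s h > 0"
  unfolding flow_def using \<delta>_pos fI_pos
  by (intro add_pos_nonneg mult_pos_pos mult_nonneg_nonneg) auto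

lemma flow_0 [simp]: "flow 0 h = h"
  by (simp add: flow_def)

lemma continuous_on_flow [continuous_intros]:
  "continuous_on S f \<Longrightarrow> continuous_on S h \<Longrightarrow> continuous_on S (\<lambda>x. flow (f x) (h x))"
  unfolding flow_def by (intro continuous_intros)

lemma DERIV_flow_h: "((\<lambda>h. flow s h) has_real_derivative exp (- \<delta> * s)) (at h)"
  unfolding flow_def by (auto intro!: derivative_eq_intros)

lemma DERIV_flow_s: "((\<lambda>s. flow s h) has_real_derivative (fI - \<delta> * h) * exp (- \<delta> * s)) (at s within S)"
  unfolding flow_def using \<delta>_pos by (auto intro!: derivative_eq_intros simp: field_simps)

lemma DERIV_mort:
  assumes "(f has_real_derivative f') (at x within S)" and "f x > 0"
  shows "((\<lambda>x. mort (f x)) has_real_derivative mort' (f x) * f') (at x within S)"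
  using assms unfolding mort_def mort'_def
  by (auto intro!: derivative_eq_intros simp: powr_diff)

lemma continuous_on_mort_flow: "continuous_on D (\<lambda>(v, h). mort (flow v h))"
  unfolding mort_def case_prod_beta
  by (intro continuous_intros) (auto dest: flow_pos)

lemma continuous_on_mort'_flow: "continuous_on D (\<lambda>(v, h). mort' (flow v h) * exp (- \<delta> * v))"
  unfolding mort'_def case_prod_beta
  by (intro continuous_intros) (auto dest: flow_pos)

lemma continuous_on_Lambda: "continuous_on D (\<lambda>(s, h). Lambda s h)"
  unfolding Lambda_def by (rule continuous_on_integral_upper_param[OF continuous_on_mort_flow])

lemma continuous_on_Lambda_dh: "continuous_on D (\<lambda>(s, h). Lambda_dh s h)"
  unfolding Lambda_dh_def by (rule continuous_on_integral_upper_param[OF continuous_on_mort'_flow])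

lemma DERIV_Lambda_h:
  assumes "s \<ge> 0" and "h > 0"
  shows "((\<lambda>h. Lambda s h) has_real_derivative Lambda_dh s h) (at h)"
  unfolding Lambda_def Lambda_dh_def
proof (rule DERIV_integral_param[where U = "{0<..}"])
  show "((\<lambda>h. mort (flow v h)) has_real_derivative mort' (flow v y) * exp (- \<delta> * v)) (at y)"
    if "v \<in> {0..s}" and "y \<in> {0<..}" for v y
    using that by (intro DERIV_mort DERIV_flow_h flow_pos) auto
  show "continuous_on ({0..s} \<times> {0<..}) (\<lambda>(v, h). mort (flow v h))"
    by (rule continuous_on_subset[OF continuous_on_mort_flow]) auto
  show "continuous_on ({0..s} \<times> {0<..}) (\<lambda>(v, h). mort' (flow v h) * exp (- \<delta> * v))"
    by (rule continuous_on_subset[OF continuous_on_mort'_flow]) auto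
qed (simp_all add: assms convex_real_interval)

lemma DERIV_Lambda_s:
  assumes "0 \<le> s" and "s \<le> L" and "h > 0"
  shows "((\<lambda>s. Lambda s h) has_real_derivative mort (flow s h)) (at s within {0..L})"
  unfolding Lambda_def has_real_derivative_iff_has_vector_derivative
  using assms
  by (intro integral_has_vector_derivative continuous_on_slice[OF continuous_on_mort_flow]) auto

text \<open>Along the flow \<open>\<partial>\<^sub>s\<close> acts as \<open>(fI - \<delta> h) \<partial>\<^sub>h\<close>: compare \<open>DERIV_flow_s\<close> with \<open>DERIV_flow_h\<close>.\<close>

lemma Lambda_dh_transport:
  assumes "s \<ge> 0" and "h > 0"
  shows "(fI - \<delta> * h) * Lambda_dh s h = mort (flow s h) - mort h"
proof -
  have FTC: "((\<lambda>v. (fI - \<delta> * h) * (mort' (flow v h) * exp (- \<delta> * v))) has_integral mort (flow s h) - mort (flow 0 h)) {0..s}"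
  proof (rule fundamental_theorem_of_calculus[OF assms(1)])
    show "((\<lambda>v. mort (flow v h)) has_vector_derivative (fI - \<delta> * h) * (mort' (flow v h) * exp (- \<delta> * v)))
        (at v within {0..s})" if "v \<in> {0..s}" for v
      using DERIV_mort[OF DERIV_flow_s flow_pos, of v h] that assms
      by (simp add: has_real_derivative_iff_has_vector_derivative[symmetric] ac_simps)
  qed
  have "((\<lambda>v. (fI - \<delta> * h) * (mort' (flow v h) * exp (- \<delta> * v))) has_integral (fI - \<delta> * h) * Lambda_dh s h) {0..s}"
    unfolding Lambda_dh_def using assms
    by (intro has_integral_mult_right integrable_integral integrable_continuous_real
        continuous_on_slice[OF continuous_on_mort'_flow]) auto
  from has_integral_unique[OF this FTC] show ?thesis
    by simp
qed

lemma continuous_on_k: "continuous_on D (\<lambda>(s, h). k s h)"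
  unfolding k_def case_prod_beta
  using continuous_on_Lambda by (intro continuous_intros) (simp add: case_prod_beta)

lemma continuous_on_k_dh: "continuous_on D (\<lambda>(s, h). k_dh s h)"
  unfolding k_dh_def case_prod_beta
  using continuous_on_Lambda continuous_on_Lambda_dh by (intro continuous_intros) (simp_all add: case_prod_beta)

lemma continuous_on_g: "continuous_on D (\<lambda>(s, h). g s h)"
  unfolding g_def by (rule continuous_on_integral_upper_param[OF continuous_on_k])

lemma continuous_on_g_dh: "continuous_on D (\<lambda>(s, h). g_dh s h)"
  unfolding g_dh_def by (rule continuous_on_integral_upper_param[OF continuous_on_k_dh])

lemma DERIV_k_h:
  assumes "s \<ge> 0" and "h > 0"
  shows "((\<lambda>h. k s h) has_real_derivative k_dh s h) (at h)"
  unfolding k_def k_dh_def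
  by (rule derivative_eq_intros DERIV_Lambda_h[OF assms] DERIV_flow_h refl | simp)+
    (simp add: algebra_simps)

lemma DERIV_k_s:
  assumes "0 \<le> s" and "s \<le> L" and h: "h > 0"
  shows "((\<lambda>s. k s h) has_real_derivative (\<beta> - q * mort h) * k s h + (fI - \<delta> * h) * k_dh s h)
      (at s within {0..L})"
proof -
  let ?E = "c * exp (\<beta> * s - q * Lambda s h)"
  have deriv: "((\<lambda>s. k s h) has_real_derivative
      ?E * ((\<beta> - q * mort (flow s h)) * flow s h + (fI - \<delta> * h) * exp (- \<delta> * s))) (at s within {0..L})"
    unfolding k_def
    by (rule derivative_eq_intros DERIV_Lambda_s[OF assms] DERIV_flow_s refl | simp)+
      (simp add: algebra_simps)
  have transport: "(fI - \<delta> * h) * Lambda_dh s h = mort (flow s h) - mort h"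
    using assms by (intro Lambda_dh_transport) auto
  have "(\<beta> - q * mort h) * k s h + (fI - \<delta> * h) * k_dh s h
      = ?E * ((\<beta> - q * mort h) * flow s h + (fI - \<delta> * h) * exp (- \<delta> * s)
          - q * ((fI - \<delta> * h) * Lambda_dh s h) * flow s h)"
    by (simp add: k_def k_dh_def algebra_simps)
  also have "\<dots> = ?E * ((\<beta> - q * mort (flow s h)) * flow s h + (fI - \<delta> * h) * exp (- \<delta> * s))"
    unfolding transport by (simp add: algebra_simps)
  finally show ?thesis
    using deriv by simp
qed

lemma DERIV_g_h:
  assumes "s \<ge> 0" and "h > 0"
  shows "((\<lambda>h. g s h) has_real_derivative g_dh s h) (at h)"
  unfolding g_def g_dh_def
proof (rule DERIV_integral_param[where U = "{0<..}"])
  show "continuous_on ({0..s} \<times> {0<..}) (\<lambda>(v, h). k v h)"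
    by (rule continuous_on_subset[OF continuous_on_k]) auto
  show "continuous_on ({0..s} \<times> {0<..}) (\<lambda>(v, h). k_dh v h)"
    by (rule continuous_on_subset[OF continuous_on_k_dh]) auto
qed (simp_all add: assms DERIV_k_h)

lemma DERIV_g_s:
  assumes "0 \<le> s" and "s \<le> L" and "h > 0"
  shows "((\<lambda>s. g s h) has_real_derivative k s h) (at s within {0..L})"
  unfolding g_def has_real_derivative_iff_has_vector_derivative
  using assms by (intro integral_has_vector_derivative continuous_on_slice[OF continuous_on_k]) auto

lemma k_0 [simp]: "k 0 h = c * h"
  by (simp add: k_def Lambda_def)

lemma g_transport:
  assumes "\<tau> \<ge> 0" and h: "h > 0"
  shows "k \<tau> h = (fI - \<delta> * h) * g_dh \<tau> h + (\<beta> - q * mort h) * g \<tau> h + c * h"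
proof -
  let ?k' = "\<lambda>\<sigma>. (\<beta> - q * mort h) * k \<sigma> h + (fI - \<delta> * h) * k_dh \<sigma> h"
  have "(?k' has_integral k \<tau> h - k 0 h) {0..\<tau>}"
  proof (rule fundamental_theorem_of_calculus[OF assms(1)])
    show "((\<lambda>s. k s h) has_vector_derivative ?k' \<sigma>) (at \<sigma> within {0..\<tau>})" if "\<sigma> \<in> {0..\<tau>}" for \<sigma>
      unfolding has_real_derivative_iff_has_vector_derivative[symmetric]
      using that h by (intro DERIV_k_s) auto
  qed
  moreover have "(?k' has_integral (\<beta> - q * mort h) * g \<tau> h + (fI - \<delta> * h) * g_dh \<tau> h) {0..\<tau>}"
    unfolding g_def g_dh_def using assms
    by (intro has_integral_add has_integral_mult_right integrable_integral integrable_continuous_real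
        continuous_on_slice[OF continuous_on_k] continuous_on_slice[OF continuous_on_k_dh]) auto
  ultimately have "k \<tau> h - k 0 h = (\<beta> - q * mort h) * g \<tau> h + (fI - \<delta> * h) * g_dh \<tau> h"
    by (rule has_integral_unique)
  then show ?thesis
    by (simp add: algebra_simps)
qed

lemma H2_eq_flow: "H2 \<delta> fI t h s = flow (s - t) h"
  by (simp add: H2_def flow_def)

lemma MH2_eq_mort_flow: "MH2 m0 m1 \<kappa> \<delta> fI t h s = mort (flow (s - t) h)"
  by (simp add: MH2_def H2_eq_flow mort_def)

lemma set_integral_MH2:
  assumes "t \<le> s" and "h > 0"
  shows "(LINT u:{t..s}|lborel. MH2 m0 m1 \<kappa> \<delta> fI t h u) = Lambda (s - t) h"
  unfolding MH2_eq_mort_flow Lambda_def using assms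
  by (intro set_integral_Icc_shift continuous_on_slice[OF continuous_on_mort_flow]) auto

lemma set_integral_discount_rate:
  assumes "t \<le> s" and "h > 0"
  shows "(LINT u:{t..s}|lborel. \<rho> + MH2 m0 m1 \<kappa> \<delta> fI t h u) = \<rho> * (s - t) + Lambda (s - t) h"
proof -
  have mort_flow: "continuous_on {0..s - t} (\<lambda>v. mort (flow v h))"
    using assms by (intro continuous_on_slice[OF continuous_on_mort_flow]) auto
  then have "(LINT u:{t..s}|lborel. \<rho> + MH2 m0 m1 \<kappa> \<delta> fI t h u) = integral {0..s - t} (\<lambda>v. \<rho> + mort (flow v h))"
    unfolding MH2_eq_mort_flow by (intro set_integral_Icc_shift continuous_intros)
  also have "\<dots> = \<rho> * (s - t) + Lambda (s - t) h"
    using assms mort_flow by (subst integral_add) (auto simp: Lambda_def integrable_continuous_real)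
  finally show ?thesis .
qed

lemma discounted_utility_pathwise:
  assumes "\<alpha> > 0" and p: "p = \<alpha> / (\<alpha> - 1)" and \<theta>: "\<theta> = (\<mu> - r) / \<sigma>"
    and c: "c = (1 - \<alpha>) / \<alpha> powr p" and q: "q = 1 - p"
    and "t \<le> s" and "z > 0" and "h > 0"
  shows "exp (- (LINT u:{t..s}|lborel. \<rho> + MH2 m0 m1 \<kappa> \<delta> fI t h u))
      * u_hat \<alpha> (Z2 B r \<mu> \<sigma> \<rho> m0 m1 \<kappa> \<delta> fI t z h s \<omega>) (H2 \<delta> fI t h s)
    = z powr p * c * exp ((- \<rho> + p * (\<rho> - r) - p * \<theta>\<^sup>2 / 2) * (s - t) - q * Lambda (s - t) h)
      * flow (s - t) h * exp (- p * \<theta> * (B s \<omega> - B t \<omega>))"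
proof -
  define X where "X = (\<rho> - r) * (s - t) + Lambda (s - t) h - \<theta>\<^sup>2 / 2 * (s - t) - \<theta> * (B s \<omega> - B t \<omega>)"
  have Z: "Z2 B r \<mu> \<sigma> \<rho> m0 m1 \<kappa> \<delta> fI t z h s \<omega> = z * exp X"
    unfolding Z2_def X_def \<theta> using assms by (simp add: set_integral_MH2)
  have U: "u_hat \<alpha> (z * exp X) y = c * z powr p * exp (X * p) * y" for y
    unfolding u_hat_def c p[symmetric] using assms by (simp add: powr_divide powr_mult exp_powr_real)
  have "- (\<rho> * (s - t) + Lambda (s - t) h) + X * p
      = (- \<rho> + p * (\<rho> - r) - p * \<theta>\<^sup>2 / 2) * (s - t) - q * Lambda (s - t) h + - p * \<theta> * (B s \<omega> - B t \<omega>)"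
    unfolding X_def q by (simp add: algebra_simps)
  then have "exp (- (\<rho> * (s - t) + Lambda (s - t) h)) * exp (X * p)
      = exp ((- \<rho> + p * (\<rho> - r) - p * \<theta>\<^sup>2 / 2) * (s - t) - q * Lambda (s - t) h) * exp (- p * \<theta> * (B s \<omega> - B t \<omega>))"
    by (simp flip: exp_add)
  then show ?thesis
    unfolding set_integral_discount_rate[OF assms(6,8)] Z U H2_eq_flow by (simp add: algebra_simps)
qed

lemma W_fun_closed_form:
  assumes "prob_space M" and "std_brownian_motion M B"
    and "\<alpha> > 0" and p: "p = \<alpha> / (\<alpha> - 1)" and \<theta>: "\<theta> = (\<mu> - r) / \<sigma>"
    and \<beta>: "\<beta> = - \<rho> + p * (\<rho> - r) + \<theta>\<^sup>2 * p * (p - 1) / 2"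
    and c: "c = (1 - \<alpha>) / \<alpha> powr p" and q: "q = 1 - p"
    and t: "0 \<le> t" "t \<le> T" and "z > 0" and h: "h > 0"
  shows "W_fun M B T r \<mu> \<sigma> \<rho> m0 m1 \<kappa> \<delta> \<alpha> fI t z h = z powr p * g (T - t) h"
proof -
  define D where "D s = z powr p * c * exp ((- \<rho> + p * (\<rho> - r) - p * \<theta>\<^sup>2 / 2) * (s - t) - q * Lambda (s - t) h)
      * flow (s - t) h" for s
  have "continuous_on {0..T - t} (\<lambda>v. Lambda v h)"
    using h by (intro continuous_on_slice[OF continuous_on_Lambda]) auto
  then have "continuous_on {t..T} (\<lambda>s. Lambda (s - t) h)"
    by (rule continuous_on_compose2) (auto intro!: continuous_intros)
  then have D_cont: "continuous_on {t..T} D"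
    unfolding D_def by (intro continuous_intros)
  have "W_fun M B T r \<mu> \<sigma> \<rho> m0 m1 \<kappa> \<delta> \<alpha> fI t z h
      = (\<integral>\<omega>. (LINT s:{t..T}|lborel. D s * exp (- p * \<theta> * (B s \<omega> - B t \<omega>))) \<partial>M)"
    unfolding W_fun_def D_def using assms
    by (intro Bochner_Integration.integral_cong set_lebesgue_integral_cong)
      (auto simp: discounted_utility_pathwise)
  also have "\<dots> = (LINT s:{t..T}|lborel. D s * exp ((- p * \<theta>)\<^sup>2 * (s - t) / 2))"
    using assms(1,2) t(1) D_cont by (rule expectation_set_integral_exp_increment)
  also have "\<dots> = (LINT s:{t..T}|lborel. z powr p * k (s - t) h)"
  proof (intro set_lebesgue_integral_cong allI impI)
    fix s
    have "exp ((- \<rho> + p * (\<rho> - r) - p * \<theta>\<^sup>2 / 2) * (s - t) - q * Lambda (s - t) h) * exp ((- p * \<theta>)\<^sup>2 * (s - t) / 2)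
        = exp (\<beta> * (s - t) - q * Lambda (s - t) h)"
      unfolding \<beta> by (simp add: power2_eq_square field_simps flip: exp_add)
    then show "D s * exp ((- p * \<theta>)\<^sup>2 * (s - t) / 2) = z powr p * k (s - t) h"
      unfolding D_def k_def by (simp add: algebra_simps)
  qed simp
  also have "\<dots> = z powr p * g (T - t) h"
    unfolding g_def using t h
    by (simp add: set_integral_Icc_shift[where f = "\<lambda>v. k v h"] continuous_on_slice[OF continuous_on_k])
  finally show ?thesis .
qed

lemma separable_pde_identity:
  assumes \<beta>: "\<beta> = - \<rho> + p * (\<rho> - r) + \<theta>\<^sup>2 * p * (p - 1) / 2" and q: "q = 1 - p"
    and z: "z > 0" and "\<tau> \<ge> 0" and "h > 0"
  shows "- (- (z powr p * k \<tau> h)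
        + 1/2 * \<theta>\<^sup>2 * z\<^sup>2 * (z powr (p - 2) * (p * (p - 1) * g \<tau> h))
        + (\<rho> - r + m0 + m1 * h powr (- \<kappa>)) * z * (z powr (p - 1) * (p * g \<tau> h))
        + (- \<delta> * h + fI) * (z powr p * g_dh \<tau> h)
        - (\<rho> + m0 + m1 * h powr (- \<kappa>)) * (z powr p * g \<tau> h))
    = c * z powr p * h"
proof -
  define A G Gh where "A = z powr p" and "G = g \<tau> h" and "Gh = g_dh \<tau> h"
  have powr_p: "z powr (p - 1) = A / z" "z powr (p - 2) = A / z\<^sup>2"
    using z by (simp_all add: A_def powr_diff power2_eq_square)
  have k: "k \<tau> h = (fI - \<delta> * h) * Gh + (\<beta> - q * mort h) * G + c * h"
    unfolding G_def Gh_def using assms(4,5) by (rule g_transport)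
  show ?thesis
    unfolding powr_p k mort_def A_def[symmetric] G_def[symmetric] Gh_def[symmetric]
    unfolding \<beta> q using z by (simp add: field_simps power2_eq_square)
qed

lemma continuous_on_separable:
  fixes F :: "real \<Rightarrow> real \<Rightarrow> real" and S :: "(real \<times> real \<times> real) set"
  assumes "continuous_on D (\<lambda>(s, h). F s h)" and "S \<subseteq> {..T} \<times> {0<..} \<times> {0<..}"
  shows "continuous_on S (\<lambda>(t, z, h). z powr a * F (T - t) h)"
proof -
  have "continuous_on S (\<lambda>x. (\<lambda>(s, h). F s h) (T - fst x, snd (snd x)))"
    by (rule continuous_on_compose2[OF assms(1)]) (use assms(2) in \<open>auto intro!: continuous_intros\<close>)
  moreover have "continuous_on S (\<lambda>x. fst (snd x) powr a)"
    by (intro continuous_intros) (use assms(2) in auto)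
  ultimately show ?thesis
    by (auto simp: case_prod_beta intro: continuous_on_mult)
qed

lemma DERIV_g_time_reversal:
  assumes "t \<in> {0..<T}" and "h > 0"
  shows "((\<lambda>s. g (T - s) h) has_real_derivative - k (T - t) h) (at t within {0..<T})"
proof -
  have "((\<lambda>s. g s h) has_real_derivative k (T - t) h) (at (T - t) within (\<lambda>s. T - s) ` {0..<T})"
    by (rule has_field_derivative_subset[OF DERIV_g_s[of "T - t" T h]]) (use assms in auto)
  from DERIV_image_chain[OF this DERIV_diff[OF DERIV_const DERIV_ident]]
  show ?thesis
    by (simp add: o_def)
qed

lemma separable_derivatives:
  fixes W :: "real \<Rightarrow> real \<Rightarrow> real \<Rightarrow> real"
  assumes W: "\<And>t z h. t \<in> {0..T} \<Longrightarrow> z > 0 \<Longrightarrow> h > 0 \<Longrightarrow> W t z h = z powr p * g (T - t) h"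
    and t: "t \<in> {0..<T}" and z: "z > 0" and h: "h > 0"
  shows "((\<lambda>s. W s z h) has_real_derivative - (z powr p * k (T - t) h)) (at t within {0..<T})"
    and "((\<lambda>y. W t y h) has_real_derivative z powr (p - 1) * (p * g (T - t) h)) (at z)"
    and "((\<lambda>y. y powr (p - 1) * (p * g (T - t) h)) has_real_derivative
        z powr (p - 2) * (p * (p - 1) * g (T - t) h)) (at z)"
    and "((\<lambda>k. W t z k) has_real_derivative z powr p * g_dh (T - t) h) (at h)"
proof -
  have "T - t \<ge> 0"
    using t by simp
  have "((\<lambda>s. z powr p * g (T - s) h) has_real_derivative - (z powr p * k (T - t) h)) (at t within {0..<T})"
    using DERIV_cmult[OF DERIV_g_time_reversal[OF t h], of "z powr p"] by simp
  then show "((\<lambda>s. W s z h) has_real_derivative - (z powr p * k (T - t) h)) (at t within {0..<T})"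
    by (rule has_field_derivative_transform_within[where d = 1]) (use t z h W in auto)
  have "((\<lambda>y. y powr p * g (T - t) h) has_real_derivative z powr (p - 1) * (p * g (T - t) h)) (at z)"
    using z by (auto intro!: derivative_eq_intros)
  then show "((\<lambda>y. W t y h) has_real_derivative z powr (p - 1) * (p * g (T - t) h)) (at z)"
    by (rule has_field_derivative_transform_within_open[where S = "{0<..}"]) (use t z h W in auto)
  show "((\<lambda>y. y powr (p - 1) * (p * g (T - t) h)) has_real_derivative
      z powr (p - 2) * (p * (p - 1) * g (T - t) h)) (at z)"
    using z by (auto intro!: derivative_eq_intros)
  show "((\<lambda>k. W t z k) has_real_derivative z powr p * g_dh (T - t) h) (at h)"
    using DERIV_cmult[OF DERIV_g_h[OF \<open>T - t \<ge> 0\<close> h], of "z powr p"]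
    by (rule has_field_derivative_transform_within_open[where S = "{0<..}"]) (use t z h W in auto)
qed

lemma separable_solution:
  fixes W :: "real \<Rightarrow> real \<Rightarrow> real \<Rightarrow> real"
  assumes W: "\<And>t z h. t \<in> {0..T} \<Longrightarrow> z > 0 \<Longrightarrow> h > 0 \<Longrightarrow> W t z h = z powr p * g (T - t) h"
    and \<beta>: "\<beta> = - \<rho> + p * (\<rho> - r) + \<theta>\<^sup>2 * p * (p - 1) / 2" and q: "q = 1 - p"
    and u: "\<And>z h. z > 0 \<Longrightarrow> u z h = c * z powr p * h" and "T \<ge> 0"
  shows "continuous_on ({0..T} \<times> {0<..} \<times> {0<..}) (\<lambda>(t, z, h). W t z h)
    \<and> (\<exists>Wt Wz Wzz Wh.
         continuous_on ({0..<T} \<times> {0<..} \<times> {0<..}) (\<lambda>(t, z, h). Wt t z h)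
       \<and> continuous_on ({0..<T} \<times> {0<..} \<times> {0<..}) (\<lambda>(t, z, h). Wz t z h)
       \<and> continuous_on ({0..<T} \<times> {0<..} \<times> {0<..}) (\<lambda>(t, z, h). Wzz t z h)
       \<and> continuous_on ({0..<T} \<times> {0<..} \<times> {0<..}) (\<lambda>(t, z, h). Wh t z h)
       \<and> (\<forall>t\<in>{0..<T}. \<forall>z>0. \<forall>h>0.
            ((\<lambda>s. W s z h) has_real_derivative Wt t z h) (at t within {0..<T})
          \<and> ((\<lambda>y. W t y h) has_real_derivative Wz t z h) (at z)
          \<and> ((\<lambda>y. Wz t y h) has_real_derivative Wzz t z h) (at z)
          \<and> ((\<lambda>k. W t z k) has_real_derivative Wh t z h) (at h)
          \<and> - (Wt t z h + 1/2 * \<theta>\<^sup>2 * z\<^sup>2 * Wzz t z h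
                + (\<rho> - r + m0 + m1 * h powr (- \<kappa>)) * z * Wz t z h
                + (- \<delta> * h + fI) * Wh t z h
                - (\<rho> + m0 + m1 * h powr (- \<kappa>)) * W t z h)
            = u z h))
    \<and> (\<forall>z>0. \<forall>h>0. W T z h = 0)"
proof -
  define Wt where "Wt t z h = - (z powr p * k (T - t) h)" for t z h
  define Wz where "Wz t z h = z powr (p - 1) * (p * g (T - t) h)" for t z h
  define Wzz where "Wzz t z h = z powr (p - 2) * (p * (p - 1) * g (T - t) h)" for t z h
  define Wh where "Wh t z h = z powr p * g_dh (T - t) h" for t z h
  let ?S = "{0..<T} \<times> {0<..} \<times> {0<..} :: (real \<times> real \<times> real) set"
  have S: "?S \<subseteq> {..T} \<times> {0<..} \<times> {0<..}"
    by auto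
  have scaled: "continuous_on D (\<lambda>(s, h). b * F s h)" if "continuous_on D (\<lambda>(s, h). F s h)"
    for b :: real and F :: "real \<Rightarrow> real \<Rightarrow> real"
    using that by (simp add: case_prod_beta continuous_on_mult_left)
  have "continuous_on ({0..T} \<times> {0<..} \<times> {0<..}) (\<lambda>(t, z, h). z powr p * g (T - t) h)"
    by (intro continuous_on_separable continuous_on_g) auto
  then have "continuous_on ({0..T} \<times> {0<..} \<times> {0<..}) (\<lambda>(t, z, h). W t z h)"
    by (rule continuous_on_eq) (auto simp: W)
  moreover have "continuous_on ?S (\<lambda>(t, z, h). Wt t z h)"
    using continuous_on_minus[OF continuous_on_separable[OF continuous_on_k S, of p]]
    by (simp add: Wt_def case_prod_beta)
  moreover have "continuous_on ?S (\<lambda>(t, z, h). Wz t z h)"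
    unfolding Wz_def by (rule continuous_on_separable[OF scaled[OF continuous_on_g] S])
  moreover have "continuous_on ?S (\<lambda>(t, z, h). Wzz t z h)"
    unfolding Wzz_def by (rule continuous_on_separable[OF scaled[OF continuous_on_g] S])
  moreover have "continuous_on ?S (\<lambda>(t, z, h). Wh t z h)"
    unfolding Wh_def by (rule continuous_on_separable[OF continuous_on_g_dh S])
  moreover have "- (Wt t z h + 1/2 * \<theta>\<^sup>2 * z\<^sup>2 * Wzz t z h
        + (\<rho> - r + m0 + m1 * h powr (- \<kappa>)) * z * Wz t z h
        + (- \<delta> * h + fI) * Wh t z h
        - (\<rho> + m0 + m1 * h powr (- \<kappa>)) * W t z h) = u z h"
    if "t \<in> {0..<T}" "z > 0" "h > 0" for t z h
    using separable_pde_identity[OF \<beta> q, of z "T - t" h] that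
    by (simp add: W u Wt_def Wz_def Wzz_def Wh_def)
  moreover have "((\<lambda>s. W s z h) has_real_derivative Wt t z h) (at t within {0..<T})
      \<and> ((\<lambda>y. W t y h) has_real_derivative Wz t z h) (at z)
      \<and> ((\<lambda>y. Wz t y h) has_real_derivative Wzz t z h) (at z)
      \<and> ((\<lambda>k. W t z k) has_real_derivative Wh t z h) (at h)"
    if "t \<in> {0..<T}" "z > 0" "h > 0" for t z h
    unfolding Wt_def Wz_def Wzz_def Wh_def using separable_derivatives[OF W that] by blast
  moreover have "W T z h = 0" if "z > 0" "h > 0" for z h
    using W[of T z h] that \<open>T \<ge> 0\<close> by (simp add: g_def)
  ultimately show ?thesis
    by (intro conjI exI[of _ Wt] exI[of _ Wz] exI[of _ Wzz] exI[of _ Wh] ballI allI impI) simp_all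
qed

end

theorem proposition3p1:
  fixes M :: "'a measure" and B :: "real \<Rightarrow> 'a \<Rightarrow> real"
    and T r \<mu> \<sigma> \<rho> m0 m1 \<kappa> \<delta> \<alpha> fI :: real
  assumes "prob_space M" and "std_brownian_motion M B"
    and "T > 0" and "r > 0" and "\<sigma> > 0" and "\<rho> > 0" and "m0 \<ge> 0" and "m1 \<ge> 0"
    and "\<kappa> > 0" and "\<delta> > 0" and "0 < \<alpha>" and "\<alpha> < 1" and "fI > 0"
  defines "W \<equiv> W_fun M B T r \<mu> \<sigma> \<rho> m0 m1 \<kappa> \<delta> \<alpha> fI"
    and "\<theta> \<equiv> (\<mu> - r) / \<sigma>"
  shows "continuous_on ({0..T} \<times> {0<..} \<times> {0<..}) (\<lambda>(t, z, h). W t z h)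
    \<and> (\<exists>Wt Wz Wzz Wh.
         continuous_on ({0..<T} \<times> {0<..} \<times> {0<..}) (\<lambda>(t, z, h). Wt t z h)
       \<and> continuous_on ({0..<T} \<times> {0<..} \<times> {0<..}) (\<lambda>(t, z, h). Wz t z h)
       \<and> continuous_on ({0..<T} \<times> {0<..} \<times> {0<..}) (\<lambda>(t, z, h). Wzz t z h)
       \<and> continuous_on ({0..<T} \<times> {0<..} \<times> {0<..}) (\<lambda>(t, z, h). Wh t z h)
       \<and> (\<forall>t\<in>{0..<T}. \<forall>z>0. \<forall>h>0.
            ((\<lambda>s. W s z h) has_real_derivative Wt t z h) (at t within {0..<T})
          \<and> ((\<lambda>y. W t y h) has_real_derivative Wz t z h) (at z)
          \<and> ((\<lambda>y. Wz t y h) has_real_derivative Wzz t z h) (at z)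
          \<and> ((\<lambda>k. W t z k) has_real_derivative Wh t z h) (at h)
          \<and> - (Wt t z h + 1/2 * \<theta>\<^sup>2 * z\<^sup>2 * Wzz t z h
                + (\<rho> - r + m0 + m1 * h powr (- \<kappa>)) * z * Wz t z h
                + (- \<delta> * h + fI) * Wh t z h
                - (\<rho> + m0 + m1 * h powr (- \<kappa>)) * W t z h)
            = u_hat \<alpha> z h))
    \<and> (\<forall>z>0. \<forall>h>0. W T z h = 0)"
proof -
  define p where "p = \<alpha> / (\<alpha> - 1)"
  define q where "q = 1 - p"
  define \<beta> where "\<beta> = - \<rho> + p * (\<rho> - r) + \<theta>\<^sup>2 * p * (p - 1) / 2"
  define c where "c = (1 - \<alpha>) / \<alpha> powr p"
  interpret habit_model \<delta> fI \<kappa> m0 m1 \<beta> c q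
    by unfold_locales (use assms in auto)
  have "W t z h = z powr p * g (T - t) h" if "t \<in> {0..T}" "z > 0" "h > 0" for t z h
    unfolding W_def using that
    by (intro W_fun_closed_form[OF assms(1,2,11) p_def \<theta>_def[THEN meta_eq_to_obj_eq] \<beta>_def c_def q_def]) auto
  moreover have "u_hat \<alpha> z h = c * z powr p * h" if "z > 0" for z h
    using that assms(11) by (simp add: u_hat_def c_def p_def powr_divide)
  ultimately show ?thesis
    using assms(3) by (intro separable_solution[OF _ \<beta>_def q_def]) auto
qed

end
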